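(* Let $a_1,\dots,a_5$ and $\alpha_1,\dots,\alpha_5$ be positive real numbers with $\sum_{i=1}^5\alpha_i=\pi$. Then $$\sum_{i=1}^5 a_i\cos\alpha_i\;\le\;\frac{1+\sqrt5}{4}\cdot\frac{1}{a_1a_2a_3a_4a_5}\left(a_1^2a_2^2a_3^2+a_2^2a_3^2a_4^2+a_3^2a_4^2a_5^2+a_4^2a_5^2a_1^2+a_5^2a_1^2a_2^2\right).$$ *)

theory Defs
  imports Complex_Main
begin

end

theory Submission
  imports Defs "HOL-Analysis.Analysis"
begin

text \<open>With \<open>c = (1 + sqrt 5) / 4 = cos (pi / 5)\<close> the right-hand side is \<open>c (T1 + ... + T5)\<close>,
  where \<open>T1 = a5 a1 a2 / (a3 a4)\<close> and the other \<open>Ti\<close> arise by cyclic shifts. With \<open>wi = sqrt Ti\<close>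
  every \<open>ai\<close> is a product of two weights that are adjacent in the pentagram order 1, 3, 5, 2, 4,
  so the claim becomes \<open>\<Sum> wj wk cos \<beta>j \<le> c \<Sum> wj\<^sup>2\<close> along a 5-cycle whose angles \<open>\<beta>j\<close> sum to \<open>pi\<close>.
  Planar vectors \<open>vj\<close> of length \<open>wj\<close> whose successive directions turn by \<open>pi - \<beta>j\<close> close up
  after two full turns and satisfy \<open>wj wk cos \<beta>j = - \<langle>vj, vk\<rangle>\<close>. The inequality is then the
  positivity of the quadratic form \<open>c \<Sum> |vj|\<^sup>2 + \<Sum> \<langle>vj, vj+1\<rangle>\<close> of the 5-cycle, whose least adjacency
  eigenvalue is \<open>2 cos (4 pi / 5) = - 2 c\<close>; an explicit sum of three squares certifies it.\<close>

lemma sqrt_mult_eq_of_mult_eq_power2: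
  fixes x y a :: real
  assumes "x * y = a^2" "0 \<le> a"
  shows "sqrt x * sqrt y = a"
  using assms by (simp flip: real_sqrt_mult)

lemma pentagon_form_nonneg:
  fixes v1 v2 v3 v4 v5 :: "'a::real_inner"
  shows "0 \<le> (1 + sqrt 5) / 4 * (norm v1^2 + norm v2^2 + norm v3^2 + norm v4^2 + norm v5^2)
          + (inner v1 v2 + inner v2 v3 + inner v3 v4 + inner v4 v5 + inner v5 v1)"
proof -
  define s where "s = sqrt 5"
  have "s > 1" unfolding s_def by (simp add: real_less_rsqrt)
  have ss: "s * (s * x) = 5 * x" for x
    unfolding s_def by (simp flip: mult.assoc)
  have "4 * ((1 + s) * (norm v1^2 + norm v2^2 + norm v3^2 + norm v4^2 + norm v5^2)
          + 4 * (inner v1 v2 + inner v2 v3 + inner v3 v4 + inner v4 v5 + inner v5 v1))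
     = (1 + s) * norm (2 *\<^sub>R v1 + (s - 1) *\<^sub>R v2 + (s - 1) *\<^sub>R v5)^2
       + 2 * norm (2 *\<^sub>R v2 + 2 *\<^sub>R v3 - (s - 1) *\<^sub>R v5)^2
       + (s - 1) * norm (2 *\<^sub>R v3 + (1 + s) *\<^sub>R v4 + 2 *\<^sub>R v5)^2"
    by (simp add: power2_norm_eq_inner inner_commute algebra_simps ss)
  moreover have "0 \<le> \<dots>" using \<open>s > 1\<close> by simp
  ultimately show ?thesis unfolding s_def by (simp add: field_simps)
qed

lemma inner_scaleR_cis: "inner (a *\<^sub>R cis s) (b *\<^sub>R cis t) = a * b * cos (s - t)"
  by (simp add: inner_complex_def cos_diff algebra_simps)

lemma cyclic_cos_sum_le:
  fixes w1 w2 w3 w4 w5 b1 b2 b3 b4 b5 :: real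
  assumes "b1 + b2 + b3 + b4 + b5 = pi"
  shows "w1 * w2 * cos b1 + w2 * w3 * cos b2 + w3 * w4 * cos b3 + w4 * w5 * cos b4 + w5 * w1 * cos b5
     \<le> (1 + sqrt 5) / 4 * (w1^2 + w2^2 + w3^2 + w4^2 + w5^2)"
proof -
  define t2 where "t2 = pi - b1"
  define t3 where "t3 = t2 + (pi - b2)"
  define t4 where "t4 = t3 + (pi - b3)"
  define t5 where "t5 = t4 + (pi - b4)"
  have "cos t2 = - cos b1" "cos (t2 - t3) = - cos b2" "cos (t3 - t4) = - cos b3"
       "cos (t4 - t5) = - cos b4"
    by (simp_all add: t2_def t3_def t4_def t5_def)
  moreover have "cos t5 = - cos b5"
  proof -
    have "t5 = (b5 + pi) + 2 * pi" using assms by (simp add: t2_def t3_def t4_def t5_def)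
    then show ?thesis by (simp only: cos_periodic cos_periodic_pi)
  qed
  ultimately show ?thesis
    using pentagon_form_nonneg[of "w1 *\<^sub>R cis 0" "w2 *\<^sub>R cis t2" "w3 *\<^sub>R cis t3"
        "w4 *\<^sub>R cis t4" "w5 *\<^sub>R cis t5"]
    unfolding inner_scaleR_cis by (simp add: algebra_simps)
qed

theorem theorem2:
  fixes a1 a2 a3 a4 a5 \<alpha>1 \<alpha>2 \<alpha>3 \<alpha>4 \<alpha>5 :: real
  assumes "a1 > 0" "a2 > 0" "a3 > 0" "a4 > 0" "a5 > 0"
    and "\<alpha>1 > 0" "\<alpha>2 > 0" "\<alpha>3 > 0" "\<alpha>4 > 0" "\<alpha>5 > 0"
    and "\<alpha>1 + \<alpha>2 + \<alpha>3 + \<alpha>4 + \<alpha>5 = pi"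
  shows "a1 * cos \<alpha>1 + a2 * cos \<alpha>2 + a3 * cos \<alpha>3 + a4 * cos \<alpha>4 + a5 * cos \<alpha>5
    \<le> (1 + sqrt 5) / 4 * (1 / (a1 * a2 * a3 * a4 * a5)) *
       (a1^2 * a2^2 * a3^2 + a2^2 * a3^2 * a4^2 + a3^2 * a4^2 * a5^2
        + a4^2 * a5^2 * a1^2 + a5^2 * a1^2 * a2^2)"
proof -
  define w1 where "w1 = sqrt (a5 * a1 * a2 / (a3 * a4))"
  define w2 where "w2 = sqrt (a1 * a2 * a3 / (a4 * a5))"
  define w3 where "w3 = sqrt (a2 * a3 * a4 / (a5 * a1))"
  define w4 where "w4 = sqrt (a3 * a4 * a5 / (a1 * a2))"
  define w5 where "w5 = sqrt (a4 * a5 * a1 / (a2 * a3))"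
  have "w5 * w2 = a1" "w2 * w4 = a3" "w4 * w1 = a5" "w1 * w3 = a2" "w3 * w5 = a4"
    using assms(1-5) unfolding w1_def w2_def w3_def w4_def w5_def
    by (auto intro!: sqrt_mult_eq_of_mult_eq_power2 simp: field_simps power2_eq_square)
  then have "a1 * cos \<alpha>1 + a2 * cos \<alpha>2 + a3 * cos \<alpha>3 + a4 * cos \<alpha>4 + a5 * cos \<alpha>5
      = w5 * w2 * cos \<alpha>1 + w2 * w4 * cos \<alpha>3 + w4 * w1 * cos \<alpha>5 + w1 * w3 * cos \<alpha>2 + w3 * w5 * cos \<alpha>4"
    by simp
  also have "\<dots> \<le> (1 + sqrt 5) / 4 * (w5^2 + w2^2 + w4^2 + w1^2 + w3^2)"
    by (rule cyclic_cos_sum_le) (use assms(11) in simp)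
  also have "\<dots> = (1 + sqrt 5) / 4 * (1 / (a1 * a2 * a3 * a4 * a5)) *
       (a1^2 * a2^2 * a3^2 + a2^2 * a3^2 * a4^2 + a3^2 * a4^2 * a5^2
        + a4^2 * a5^2 * a1^2 + a5^2 * a1^2 * a2^2)"
    using assms(1-5) by (simp add: w1_def w2_def w3_def w4_def w5_def field_simps power2_eq_square)
  finally show ?thesis .
qed

end
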